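(* Consider a wiretap setting with messages $\{1,\dots,M\}$, where $P_{Z|W=m}$ is the distribution of the eavesdropper observation $Z\in\mathcal{Z}$ when message $m$ is sent (for a fixed codebook), $P_Z:=\frac1M\sum_{m=1}^MP_{Z|W=m}$, and $\pi_Z$ is the distribution of $Z$ when no message is sent. Suppose the eavesdropper uses a measurable set $\mathcal{D}_0\subseteq\mathcal{Z}$ on which it declares that no message is sent, and upon observing $z\notin\mathcal{D}_0$ outputs a list of $T(z)$ messages; let $\mathcal{D}_m:=\{z\notin\mathcal{D}_0: m\text{ is in the list for }z\}$ and suppose $P_{Z|W=m}(\mathcal{D}_m)\ge1-\epsilon_m$ with $\epsilon_m\in[0,1]$; let $\epsilon:=\frac1M\sum_m\epsilon_m$. Let $A\in[1,\infty)$ and $\gamma\in[1,\infty)$. (i) If $\pi_Z(\mathcal{D}_0)\ge1-A^{-1}$, then $\frac1A\ge\frac1\gamma\big(1-\epsilon-E_\gamma(P_Z\|\pi_Z)\big)$. (ii) If $\mu_Z$ is any distribution on $\mathcal{Z}$ with $\mu_Z(\mathcal{D}_0)\ge1-A^{-1}$ and $\mu_Z(\mathcal{D}_0^c)>0$, and $T:=\frac1{\mu_Z(\mathcal{D}_0^c)}\int_{\mathcal{D}_0^c}T(z)\,d\mu_Z(z)$, then $$\frac{T}{MA}\ge\frac1\gamma\Big(1-\epsilon-\frac1M\sum_{m=1}^ME_\gamma(P_{Z|W=m}\|\mu_Z)\Big).$$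
   Context: $E_\gamma(P\|Q):=\sup_{\mathcal{A}}\{P(\mathcal{A})-\gamma Q(\mathcal{A})\}$. *)

theory Defs
  imports "HOL-Probability.Probability"
begin

definition E_gamma :: "real \<Rightarrow> 'a measure \<Rightarrow> 'a measure \<Rightarrow> real" where
  "E_gamma \<gamma> P Q = (SUP A \<in> sets P. measure P A - \<gamma> * measure Q A)"

definition mixture :: "'a measure \<Rightarrow> nat \<Rightarrow> (nat \<Rightarrow> 'a measure) \<Rightarrow> 'a measure" where
  "mixture N M P = measure_of (space N) (sets N)
     (\<lambda>A. (\<Sum>m\<in>{1..M}. emeasure (P m) A) / ennreal (real M))"

end

theory Submission
  imports Defs
begin

text \<open>Both bounds come from testing with a single set in the supremum defining E_gamma:
for any measurable B, Q(B) - gamma R(B) \<le> E_gamma(Q||R), i.e. R(B) \<ge> (Q(B) - E_gamma(Q||R)) / gamma.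
For (i) take B the complement of D0: the mixture gives it mass at least 1 - epsilon while
pi_Z gives it at most 1/A. For (ii) take B = D_m for each message and average: the
mu_Z-masses of the D_m add up to the integral of the list size over the complement of D0,
which is T mu_Z(D0^c) \<le> T / A.\<close>

lemma E_gamma_ge:
  fixes Q R :: "'a measure"
  assumes "finite_measure Q" "B \<in> sets Q" "\<gamma> \<ge> 0"
  shows "measure Q B - \<gamma> * measure R B \<le> E_gamma \<gamma> Q R"
  unfolding E_gamma_def
proof (rule cSUP_upper)
  show "bdd_above ((\<lambda>X. measure Q X - \<gamma> * measure R X) ` sets Q)"
  proof (rule bdd_aboveI2)
    fix X assume "X \<in> sets Q"
    then have "measure Q X \<le> measure Q (space Q)"
      using assms(1) sets.sets_into_space by (intro finite_measure.finite_measure_mono) auto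
    then show "measure Q X - \<gamma> * measure R X \<le> measure Q (space Q)"
      using mult_nonneg_nonneg[OF assms(3) measure_nonneg[of R X]] by linarith
  qed
qed fact

lemma measure_ge_E_gamma:
  fixes Q R :: "'a measure"
  assumes "finite_measure Q" "B \<in> sets Q" "\<gamma> > 0"
  shows "(measure Q B - E_gamma \<gamma> Q R) / \<gamma> \<le> measure R B"
  using E_gamma_ge[OF assms(1,2), of \<gamma> R] assms(3) by (simp add: field_simps)

lemma sets_mixture: "sets (mixture N M P) = sets N"
  unfolding mixture_def by simp

lemma space_mixture [simp]: "space (mixture N M P) = space N"
  using sets_mixture by (rule sets_eq_imp_space_eq)

lemma emeasure_mixture:
  assumes P_sets: "\<And>m. m \<in> {1..M} \<Longrightarrow> sets (P m) = sets N"
    and B: "B \<in> sets N"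
  shows "emeasure (mixture N M P) B = (\<Sum>m\<in>{1..M}. emeasure (P m) B) / ennreal (real M)"
  unfolding mixture_def
proof (rule emeasure_measure_of_sigma)
  show "countably_additive (sets N) (\<lambda>A. (\<Sum>m\<in>{1..M}. emeasure (P m) A) / ennreal (real M))"
    unfolding countably_additive_def
  proof (intro allI impI)
    fix F :: "nat \<Rightarrow> _ set"
    assume F: "range F \<subseteq> sets N" "disjoint_family F"
    have "(\<Sum>i. (\<Sum>m\<in>{1..M}. emeasure (P m) (F i)) / ennreal (real M))
        = (\<Sum>m\<in>{1..M}. \<Sum>i. emeasure (P m) (F i)) / ennreal (real M)"
      by (simp add: suminf_sum)
    also have "\<dots> = (\<Sum>m\<in>{1..M}. emeasure (P m) (\<Union>i. F i)) / ennreal (real M)"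
      using F P_sets by (simp add: suminf_emeasure)
    finally show "(\<Sum>i. (\<Sum>m\<in>{1..M}. emeasure (P m) (F i)) / ennreal (real M))
        = (\<Sum>m\<in>{1..M}. emeasure (P m) (\<Union>i. F i)) / ennreal (real M)" .
  qed
qed (auto simp: positive_def sets.sigma_algebra_axioms B)

lemma measure_mixture:
  assumes "M \<ge> 1"
    and P_prob: "\<And>m. m \<in> {1..M} \<Longrightarrow> prob_space (P m)"
    and P_sets: "\<And>m. m \<in> {1..M} \<Longrightarrow> sets (P m) = sets N"
    and B: "B \<in> sets N"
  shows "measure (mixture N M P) B = (\<Sum>m\<in>{1..M}. measure (P m) B) / real M"
proof -
  have "emeasure (mixture N M P) B = ennreal (\<Sum>m\<in>{1..M}. measure (P m) B) / ennreal (real M)"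
    using emeasure_mixture[OF P_sets B]
    by (simp add: P_prob prob_space.finite_measure finite_measure.emeasure_eq_measure)
  also have "\<dots> = ennreal ((\<Sum>m\<in>{1..M}. measure (P m) B) / real M)"
    using \<open>M \<ge> 1\<close> by (intro divide_ennreal) (auto intro: sum_nonneg)
  finally show ?thesis
    unfolding measure_def by (simp add: sum_nonneg)
qed

lemma measure_mixture_ge_average:
  assumes "M \<ge> 1"
    and P_prob: "\<And>m. m \<in> {1..M} \<Longrightarrow> prob_space (P m)"
    and P_sets: "\<And>m. m \<in> {1..M} \<Longrightarrow> sets (P m) = sets N"
    and B: "B \<in> sets N"
    and lower: "\<And>m. m \<in> {1..M} \<Longrightarrow> c m \<le> measure (P m) B"
  shows "(\<Sum>m\<in>{1..M}. c m) / real M \<le> measure (mixture N M P) B"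
proof -
  have "(\<Sum>m\<in>{1..M}. c m) / real M \<le> (\<Sum>m\<in>{1..M}. measure (P m) B) / real M"
    by (intro divide_right_mono sum_mono lower) auto
  also have "\<dots> = measure (mixture N M P) B"
    using measure_mixture[OF assms(1-4)] by simp
  finally show ?thesis .
qed

lemma prob_space_mixture:
  assumes "M \<ge> 1"
    and P_prob: "\<And>m. m \<in> {1..M} \<Longrightarrow> prob_space (P m)"
    and P_sets: "\<And>m. m \<in> {1..M} \<Longrightarrow> sets (P m) = sets N"
  shows "prob_space (mixture N M P)"
proof
  have "emeasure (P m) (space N) = 1" if "m \<in> {1..M}" for m
    using prob_space.emeasure_space_1[OF P_prob[OF that]] sets_eq_imp_space_eq[OF P_sets[OF that]]
    by simp
  then have "emeasure (mixture N M P) (space N) = of_nat M / ennreal (real M)"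
    using emeasure_mixture[of M P N "space N"] P_sets by simp
  then show "emeasure (mixture N M P) (space (mixture N M P)) = 1"
    using \<open>M \<ge> 1\<close> by (simp add: ennreal_of_nat_eq_real_of_nat divide_ennreal[symmetric])
qed

lemma set_integral_card_eq_sum_measure:
  fixes \<mu> :: "'a measure" and L :: "'a \<Rightarrow> 'b set"
  assumes "finite_measure \<mu>" "finite I"
    and L_sub: "\<And>z. z \<in> D \<Longrightarrow> L z \<subseteq> I"
    and meas: "\<And>i. i \<in> I \<Longrightarrow> {z \<in> D. i \<in> L z} \<in> sets \<mu>"
  shows "(\<integral>z\<in>D. real (card (L z)) \<partial>\<mu>) = (\<Sum>i\<in>I. measure \<mu> {z \<in> D. i \<in> L z})"
proof -
  have card_eq: "indicator D z * real (card (L z)) = (\<Sum>i\<in>I. indicator {z \<in> D. i \<in> L z} z)" for z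
  proof (cases "z \<in> D")
    case True
    have "(\<Sum>i\<in>I. indicator {z \<in> D. i \<in> L z} z) = (\<Sum>i\<in>I. if i \<in> L z then 1 else 0 :: real)"
      using True by (intro sum.cong) (auto simp: indicator_def)
    also have "\<dots> = real (card (I \<inter> L z))"
      by (simp add: sum.If_cases \<open>finite I\<close>)
    also have "I \<inter> L z = L z"
      using L_sub[OF True] by auto
    finally show ?thesis using True by simp
  qed simp
  have "(\<integral>z\<in>D. real (card (L z)) \<partial>\<mu>) = (\<integral>z. (\<Sum>i\<in>I. indicator {z \<in> D. i \<in> L z} z) \<partial>\<mu>)"
    unfolding set_lebesgue_integral_def using card_eq by (simp add: mult.commute)
  also have "\<dots> = (\<Sum>i\<in>I. measure \<mu> {z \<in> D. i \<in> L z})"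
    using assms(1) meas
    by (subst Bochner_Integration.integral_sum)
       (auto simp: finite_measure.emeasure_eq_measure)
  finally show ?thesis .
qed

lemma detection_bound:
  fixes Q R :: "'a measure"
  assumes "finite_measure Q" "B \<in> sets Q" "\<gamma> > 0"
    and "measure Q B \<ge> 1 - \<epsilon>" "measure R B \<le> a"
  shows "a \<ge> (1 / \<gamma>) * (1 - \<epsilon> - E_gamma \<gamma> Q R)"
proof -
  have "(1 - \<epsilon> - E_gamma \<gamma> Q R) / \<gamma> \<le> (measure Q B - E_gamma \<gamma> Q R) / \<gamma>"
    using assms(3,4) by (simp add: divide_right_mono)
  also have "\<dots> \<le> a"
    using measure_ge_E_gamma[OF assms(1-3), of R] assms(5) by linarith
  finally show ?thesis by simp
qed

lemma average_list_size_bound: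
  fixes \<mu> :: "'a measure" and P :: "nat \<Rightarrow> 'a measure"
  assumes \<mu>: "finite_measure \<mu>" and "M \<ge> 1" "\<gamma> > 0" "A > 0"
    and D: "0 < measure \<mu> D" "measure \<mu> D \<le> 1 / A"
    and P_fin: "\<And>m. m \<in> {1..M} \<Longrightarrow> finite_measure (P m)"
    and P_sets: "\<And>m. m \<in> {1..M} \<Longrightarrow> sets (P m) = sets \<mu>"
    and L_sub: "\<And>z. z \<in> D \<Longrightarrow> L z \<subseteq> {1..M}"
    and Dm_meas: "\<And>m. m \<in> {1..M} \<Longrightarrow> {z \<in> D. m \<in> L z} \<in> sets \<mu>"
    and decode: "\<And>m. m \<in> {1..M} \<Longrightarrow> measure (P m) {z \<in> D. m \<in> L z} \<ge> c m"
  shows "((\<integral>z\<in>D. real (card (L z)) \<partial>\<mu>) / measure \<mu> D) / (real M * A)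
         \<ge> (1 / \<gamma>) * ((\<Sum>m\<in>{1..M}. c m) / real M - (\<Sum>m\<in>{1..M}. E_gamma \<gamma> (P m) \<mu>) / real M)"
proof -
  define S where "S = (\<integral>z\<in>D. real (card (L z)) \<partial>\<mu>)"
  have S_eq: "S = (\<Sum>m\<in>{1..M}. measure \<mu> {z \<in> D. m \<in> L z})"
    unfolding S_def using set_integral_card_eq_sum_measure[OF \<mu> _ L_sub Dm_meas] by simp
  have "(\<Sum>m\<in>{1..M}. (c m - E_gamma \<gamma> (P m) \<mu>) / \<gamma>) \<le> S"
    unfolding S_eq
  proof (rule sum_mono)
    fix m assume m: "m \<in> {1..M}"
    have "(c m - E_gamma \<gamma> (P m) \<mu>) / \<gamma> \<le> (measure (P m) {z \<in> D. m \<in> L z} - E_gamma \<gamma> (P m) \<mu>) / \<gamma>"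
      using decode[OF m] \<open>\<gamma> > 0\<close> by (simp add: divide_right_mono)
    also have "\<dots> \<le> measure \<mu> {z \<in> D. m \<in> L z}"
      using P_fin[OF m] Dm_meas[OF m] P_sets[OF m] \<open>\<gamma> > 0\<close> by (simp add: measure_ge_E_gamma)
    finally show "(c m - E_gamma \<gamma> (P m) \<mu>) / \<gamma> \<le> measure \<mu> {z \<in> D. m \<in> L z}" .
  qed
  then have "((\<Sum>m\<in>{1..M}. c m) - (\<Sum>m\<in>{1..M}. E_gamma \<gamma> (P m) \<mu>)) / \<gamma> \<le> S"
    by (simp add: sum_subtractf sum_divide_distrib[symmetric])
  then have "((\<Sum>m\<in>{1..M}. c m) - (\<Sum>m\<in>{1..M}. E_gamma \<gamma> (P m) \<mu>)) / \<gamma> / real M \<le> S / real M"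
    by (rule divide_right_mono) simp
  then have "(1 / \<gamma>) * ((\<Sum>m\<in>{1..M}. c m) / real M - (\<Sum>m\<in>{1..M}. E_gamma \<gamma> (P m) \<mu>) / real M)
             \<le> S / real M"
    by (simp add: diff_divide_distrib ac_simps)
  also have "S / real M \<le> (S / measure \<mu> D) / (real M * A)"
  proof -
    have "measure \<mu> D * A \<le> 1" using D \<open>A > 0\<close> by (simp add: field_simps)
    moreover have "S \<ge> 0" using S_eq by (simp add: sum_nonneg)
    ultimately have "S * (measure \<mu> D * A) \<le> S" by (rule mult_left_le)
    then show ?thesis
      using D(1) \<open>A > 0\<close> \<open>M \<ge> 1\<close> by (simp add: field_simps)
  qed
  finally show ?thesis unfolding S_def .
qed

theorem mainTheorem17:
  fixes N :: "'z measure"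
    and M :: nat
    and P :: "nat \<Rightarrow> 'z measure"
    and \<pi> :: "'z measure"
    and D0 :: "'z set"
    and L :: "'z \<Rightarrow> nat set"
    and \<epsilon>m :: "nat \<Rightarrow> real"
    and A \<gamma> :: real
  assumes M_pos: "M \<ge> 1"
    and P_prob: "\<And>m. m \<in> {1..M} \<Longrightarrow> prob_space (P m)"
    and P_sets: "\<And>m. m \<in> {1..M} \<Longrightarrow> sets (P m) = sets N"
    and pi_prob: "prob_space \<pi>"
    and pi_sets: "sets \<pi> = sets N"
    and D0_meas: "D0 \<in> sets N"
    and L_sub: "\<And>z. z \<in> space N - D0 \<Longrightarrow> L z \<subseteq> {1..M}"
    and Dm_meas: "\<And>m. m \<in> {1..M} \<Longrightarrow> {z \<in> space N - D0. m \<in> L z} \<in> sets N"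
    and eps_range: "\<And>m. m \<in> {1..M} \<Longrightarrow> 0 \<le> \<epsilon>m m \<and> \<epsilon>m m \<le> 1"
    and decode: "\<And>m. m \<in> {1..M} \<Longrightarrow>
                   measure (P m) {z \<in> space N - D0. m \<in> L z} \<ge> 1 - \<epsilon>m m"
    and A_ge: "A \<ge> 1"
    and gamma_ge: "\<gamma> \<ge> 1"
  defines "\<epsilon> \<equiv> (\<Sum>m\<in>{1..M}. \<epsilon>m m) / real M"
  shows "(measure \<pi> D0 \<ge> 1 - 1 / A \<longrightarrow>
            1 / A \<ge> (1 / \<gamma>) * (1 - \<epsilon> - E_gamma \<gamma> (mixture N M P) \<pi>))
       \<and> (\<forall>\<mu> :: 'z measure. prob_space \<mu> \<and> sets \<mu> = sets N
            \<and> measure \<mu> D0 \<ge> 1 - 1 / A \<and> measure \<mu> (space N - D0) > 0 \<longrightarrow>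
            (let T = (\<integral>z\<in>space N - D0. real (card (L z)) \<partial>\<mu>) / measure \<mu> (space N - D0)
             in T / (real M * A) \<ge>
                (1 / \<gamma>) * (1 - \<epsilon> - (\<Sum>m\<in>{1..M}. E_gamma \<gamma> (P m) \<mu>) / real M)))"
proof -
  define D where "D = space N - D0"
  have D_meas: "D \<in> sets N" using D0_meas unfolding D_def by auto
  have avg: "1 - \<epsilon> = (\<Sum>m\<in>{1..M}. 1 - \<epsilon>m m) / real M"
    using M_pos unfolding \<epsilon>_def by (simp add: sum_subtractf field_simps)
  have compl: "measure Q D \<le> 1 / A" if "prob_space Q" "sets Q = sets N" "measure Q D0 \<ge> 1 - 1 / A" for Q
    using prob_space.prob_compl[OF that(1), of D0] that D0_meas sets_eq_imp_space_eq[OF that(2)]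
    unfolding D_def by simp
  have PD: "measure (P m) D \<ge> 1 - \<epsilon>m m" if "m \<in> {1..M}" for m
  proof -
    interpret prob_space "P m" using P_prob[OF that] .
    have "measure (P m) {z \<in> D. m \<in> L z} \<le> measure (P m) D"
      using D_meas P_sets[OF that] by (intro finite_measure_mono) auto
    then show ?thesis using decode[OF that] unfolding D_def by simp
  qed
  have mixture_D: "measure (mixture N M P) D \<ge> 1 - \<epsilon>"
    unfolding avg using M_pos P_prob P_sets D_meas PD by (rule measure_mixture_ge_average)
  show ?thesis
  proof (intro conjI impI allI)
    assume "measure \<pi> D0 \<ge> 1 - 1 / A"
    then show "1 / A \<ge> (1 / \<gamma>) * (1 - \<epsilon> - E_gamma \<gamma> (mixture N M P) \<pi>)"
      using prob_space_mixture[of M P N, OF M_pos P_prob P_sets] compl[OF pi_prob pi_sets] mixture_D D_meas gamma_ge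
      by (intro detection_bound) (auto simp: prob_space.finite_measure sets_mixture)
  next
    fix \<mu> :: "'z measure"
    assume \<mu>: "prob_space \<mu> \<and> sets \<mu> = sets N \<and> measure \<mu> D0 \<ge> 1 - 1 / A \<and> measure \<mu> (space N - D0) > 0"
    have "((\<integral>z\<in>D. real (card (L z)) \<partial>\<mu>) / measure \<mu> D) / (real M * A)
         \<ge> (1 / \<gamma>) * ((\<Sum>m\<in>{1..M}. 1 - \<epsilon>m m) / real M - (\<Sum>m\<in>{1..M}. E_gamma \<gamma> (P m) \<mu>) / real M)"
      using \<mu> compl[of \<mu>] M_pos gamma_ge A_ge P_sets L_sub Dm_meas decode
      by (intro average_list_size_bound) (auto simp: D_def prob_space.finite_measure P_prob)
    then show "let T = (\<integral>z\<in>space N - D0. real (card (L z)) \<partial>\<mu>) / measure \<mu> (space N - D0)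
             in T / (real M * A) \<ge>
                (1 / \<gamma>) * (1 - \<epsilon> - (\<Sum>m\<in>{1..M}. E_gamma \<gamma> (P m) \<mu>) / real M)"
      unfolding Let_def avg D_def .
  qed
qed

end
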